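(* Let $\mathbb{L}/\mathbb{K}$ be a finite Galois extension of degree $N$ with Galois group $G$, let $a\in\mathbb{L}[G]$, let $\mathcal{B}=(\beta_1,\dots,\beta_N)$ be a $\mathbb{K}$-basis of $\mathbb{L}$, and set $\mathbf{v}=(a(\beta_1),\dots,a(\beta_N))$. Then \[\mathrm{rk}_\mathbb{K}(a)=\dim_\mathbb{L}\big(\mathbb{L}[G]/\mathrm{Ann}_{\mathbb{L}[G]}(a)\big)=\mathrm{rk}_\mathbb{L}(M_G(\mathbf{v}))=\mathrm{rk}_\mathbb{L}(D_G(a)).\]
   Context: $\mathbb{L}[G]=\{\sum_ga_gg:a_g\in\mathbb{L}\}$ with composition product $(ag)\circ(bh)=(a\,g(b))(gh)$; $a$ acts on $\mathbb{L}$ by $x\mapsto\sum a_gg(x)$ and $\mathrm{rk}_\mathbb{K}(a)$ is the rank of this $\mathbb{K}$-linear map. $\mathrm{Ann}_{\mathbb{L}[G]}(a)=\{f\in\mathbb{L}[G]:f\circ a=0\}$. With $G=\{g_1,\dots,g_N\}$ ordered, $M_G(\mathbf{v})=(g_i(v_j))_{i,j}$ is the $G$-Moore matrix and $D_G(a)$ is the $G$-Dickson matrix with entries $D_G(a)_{g,h}=h(a_{h^{-1}g})$ (rows/columns indexed by $G$). *)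

theory Defs
  imports Main "HOL-Library.Function_Algebras" "Jordan_Normal_Form.DL_Rank"
begin

text \<open>The big field L is the type 'a; the subfield K is a subset of it.\<close>

definition subfield_of :: "'a::field set \<Rightarrow> bool" where
  "subfield_of K \<longleftrightarrow> 0 \<in> K \<and> 1 \<in> K \<and> (\<forall>x\<in>K. \<forall>y\<in>K. x + y \<in> K \<and> x * y \<in> K \<and> - x \<in> K)
     \<and> (\<forall>x\<in>K. x \<noteq> 0 \<longrightarrow> inverse x \<in> K)"

definition K_span :: "'a::field set \<Rightarrow> 'a set \<Rightarrow> 'a set" where
  "K_span K S = {x. \<exists>T c. finite T \<and> T \<subseteq> S \<and> (\<forall>t\<in>T. c t \<in> K) \<and> x = (\<Sum>t\<in>T. c t * t)}"

definition K_indep :: "'a::field set \<Rightarrow> 'a set \<Rightarrow> bool" where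
  "K_indep K S \<longleftrightarrow> (\<forall>T c. finite T \<and> T \<subseteq> S \<and> (\<forall>t\<in>T. c t \<in> K) \<and> (\<Sum>t\<in>T. c t * t) = 0
      \<longrightarrow> (\<forall>t\<in>T. c t = 0))"

definition K_is_basis :: "'a::field set \<Rightarrow> 'a set \<Rightarrow> 'a set \<Rightarrow> bool" where
  "K_is_basis K V B \<longleftrightarrow> finite B \<and> B \<subseteq> V \<and> K_indep K B \<and> K_span K B = V"

definition K_dim :: "'a::field set \<Rightarrow> 'a set \<Rightarrow> nat" where
  "K_dim K V = (if \<exists>B. K_is_basis K V B then card (SOME B. K_is_basis K V B) else 0)"

definition field_aut :: "('a::field \<Rightarrow> 'a) \<Rightarrow> bool" where
  "field_aut \<sigma> \<longleftrightarrow> bij \<sigma> \<and> (\<forall>x y. \<sigma> (x + y) = \<sigma> x + \<sigma> y) \<and> (\<forall>x y. \<sigma> (x * y) = \<sigma> x * \<sigma> y)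
      \<and> \<sigma> 1 = 1"

definition Gal :: "'a::field set \<Rightarrow> ('a \<Rightarrow> 'a) set" where
  "Gal K = {\<sigma>. field_aut \<sigma> \<and> (\<forall>x\<in>K. \<sigma> x = x)}"

definition finite_galois :: "'a::field set \<Rightarrow> bool" where
  "finite_galois K \<longleftrightarrow> subfield_of K \<and> (\<exists>B. K_is_basis K UNIV B)
     \<and> {x. \<forall>\<sigma>\<in>Gal K. \<sigma> x = x} = K"

text \<open>The skew group ring L[G]: finitely supported coefficient functions G \<rightarrow> L
  (zero outside G).\<close>
definition grp_ring :: "('a \<Rightarrow> 'a) set \<Rightarrow> (('a \<Rightarrow> 'a) \<Rightarrow> 'a::field) set" where
  "grp_ring G = {f. \<forall>g. g \<notin> G \<longrightarrow> f g = 0}"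

text \<open>Composition product: (f g) g \<circ> (a h) h = (f g * g (a h)) (g h).\<close>
definition comp_prod :: "('a \<Rightarrow> 'a) set \<Rightarrow> (('a \<Rightarrow> 'a) \<Rightarrow> 'a::field) \<Rightarrow> (('a \<Rightarrow> 'a) \<Rightarrow> 'a) \<Rightarrow> (('a \<Rightarrow> 'a) \<Rightarrow> 'a)" where
  "comp_prod G f a = (\<lambda>k. if k \<in> G then (\<Sum>g\<in>G. \<Sum>h\<in>G. if g \<circ> h = k then f g * g (a h) else 0) else 0)"

definition Ann :: "('a \<Rightarrow> 'a) set \<Rightarrow> (('a \<Rightarrow> 'a) \<Rightarrow> 'a::field) \<Rightarrow> (('a \<Rightarrow> 'a) \<Rightarrow> 'a) set" where
  "Ann G a = {f \<in> grp_ring G. comp_prod G f a = (\<lambda>_. 0)}"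

definition gr_act :: "('a \<Rightarrow> 'a) set \<Rightarrow> (('a \<Rightarrow> 'a) \<Rightarrow> 'a::field) \<Rightarrow> 'a \<Rightarrow> 'a" where
  "gr_act G a x = (\<Sum>g\<in>G. a g * g x)"

definition rk_K :: "'a::field set \<Rightarrow> ('a \<Rightarrow> 'a) set \<Rightarrow> (('a \<Rightarrow> 'a) \<Rightarrow> 'a) \<Rightarrow> nat" where
  "rk_K K G a = K_dim K (range (gr_act G a))"

definition gr_scale :: "'a::field \<Rightarrow> (('a \<Rightarrow> 'a) \<Rightarrow> 'a) \<Rightarrow> (('a \<Rightarrow> 'a) \<Rightarrow> 'a)" where
  "gr_scale c f = (\<lambda>g. c * f g)"

definition L_quot_dim :: "(('a \<Rightarrow> 'a) \<Rightarrow> 'a::field) set \<Rightarrow> (('a \<Rightarrow> 'a) \<Rightarrow> 'a) set \<Rightarrow> nat" where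
  "L_quot_dim V W = Vector_Spaces.vector_space.dim gr_scale V - Vector_Spaces.vector_space.dim gr_scale W"

definition moore_mat :: "('a \<Rightarrow> 'a) list \<Rightarrow> 'a list \<Rightarrow> 'a mat" where
  "moore_mat gs vs = mat (length gs) (length vs) (\<lambda>(i, j). (gs ! i) (vs ! j))"

definition dickson_mat :: "('a \<Rightarrow> 'a) list \<Rightarrow> (('a \<Rightarrow> 'a) \<Rightarrow> 'a) \<Rightarrow> 'a mat" where
  "dickson_mat gs a = mat (length gs) (length gs)
     (\<lambda>(i, j). (gs ! j) (a (Hilbert_Choice.inv (gs ! j) \<circ> gs ! i)))"

end

theory Submission
  imports Defs
begin

text \<open>Let \<open>G = Gal(L/K)\<close> and let \<open>\<phi>(x) = (g x)\<^sub>g\<^sub>\<in>\<^sub>G \<in> L\<^sup>G\<close> be the vector of conjugates of \<open>x\<close>.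
  By Artin's lemma (independence of characters plus the fact that \<open>K\<close> is the fixed field of
  \<open>G\<close>), \<open>\<phi>\<close> maps \<open>K\<close>-independent families to \<open>L\<close>-independent ones, so \<open>rk\<^sub>K(a)\<close> is the
  \<open>L\<close>-rank of the vectors \<open>\<phi>(a \<beta>\<^sub>j)\<close>; these are the columns of the Moore matrix.
  Transposing, the rows \<open>(h(a \<beta>\<^sub>j))\<^sub>j\<close> are the values on the basis of the elements \<open>\<delta>\<^sub>h \<circ> a\<close>,
  and \<open>L[G]\<close> acts faithfully on \<open>L\<close>, so the row rank is the dimension of the span of the
  \<open>\<delta>\<^sub>h \<circ> a\<close>.  That span is the image of right multiplication by \<open>a\<close>, whose dimension
  is \<open>dim L[G]/Ann(a)\<close> by rank--nullity, and in coordinates it is the column space of the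
  Dickson matrix.\<close>

text \<open>In this context plain \<open>inv\<close> is HOL-Algebra's structure syntax for group inverses.\<close>
abbreviation hinv :: "('b \<Rightarrow> 'c) \<Rightarrow> 'c \<Rightarrow> 'b" where "hinv \<equiv> Hilbert_Choice.inv"

lemma field_aut_add: "field_aut s \<Longrightarrow> s (x + y) = s x + s y"
  and field_aut_mult: "field_aut s \<Longrightarrow> s (x * y) = s x * s y"
  and field_aut_1: "field_aut s \<Longrightarrow> s 1 = 1"
  and field_aut_bij: "field_aut s \<Longrightarrow> bij s"
  unfolding field_aut_def by blast+

lemma field_aut_0: "field_aut s \<Longrightarrow> s 0 = 0"
  by (metis add_cancel_right_right field_aut_add)

lemma field_aut_sum: "field_aut s \<Longrightarrow> s (sum f A) = (\<Sum>x\<in>A. s (f x))"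
  by (induction A rule: infinite_finite_induct) (auto simp: field_aut_0 field_aut_add)

lemma field_aut_inv:
  assumes s: "field_aut s"
  shows "field_aut (hinv s)"
proof -
  have b: "bij s" using s field_aut_bij by blast
  have ss: "\<And>x. s (hinv s x) = x" using b by (simp add: bij_is_surj surj_f_inv_f)
  have iss: "\<And>x. hinv s (s x) = x" using b by (simp add: bij_is_inj)
  show ?thesis unfolding field_aut_def
  proof (intro conjI allI)
    show "bij (hinv s)" using b bij_imp_bij_inv by blast
    show "hinv s (x + y) = hinv s x + hinv s y" for x y
      by (metis iss ss field_aut_add[OF s])
    show "hinv s (x * y) = hinv s x * hinv s y" for x y
      by (metis iss ss field_aut_mult[OF s])
    show "hinv s 1 = 1" by (metis iss field_aut_1[OF s])
  qed
qed

lemma Gal_aut: "s \<in> Gal K \<Longrightarrow> field_aut s"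
  and Gal_fix: "s \<in> Gal K \<Longrightarrow> x \<in> K \<Longrightarrow> s x = x"
  unfolding Gal_def by auto

lemma Gal_id: "id \<in> Gal K"
  unfolding Gal_def field_aut_def by auto

lemma Gal_comp: "s \<in> Gal K \<Longrightarrow> t \<in> Gal K \<Longrightarrow> s \<circ> t \<in> Gal K"
  unfolding Gal_def field_aut_def by (auto intro: bij_comp)

lemma Gal_inv: "s \<in> Gal K \<Longrightarrow> hinv s \<in> Gal K"
  unfolding Gal_def by (auto simp: field_aut_inv) (metis bij_is_inj field_aut_bij inv_f_f)

lemma Gal_comp_eq_iff: "s \<in> Gal K \<Longrightarrow> s \<circ> t = u \<longleftrightarrow> t = hinv s \<circ> u"
  by (metis Gal_aut field_aut_bij bij_is_inj bij_is_surj inv_o_cancel surj_iff o_assoc id_comp)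

lemma fixed_field_Gal: "finite_galois K \<Longrightarrow> (\<And>s. s \<in> Gal K \<Longrightarrow> s x = x) \<Longrightarrow> x \<in> K"
  unfolding finite_galois_def by blast

section \<open>Linear algebra in function spaces\<close>

definition pscale :: "'a::field \<Rightarrow> ('i \<Rightarrow> 'a) \<Rightarrow> ('i \<Rightarrow> 'a)" where
  "pscale c f = (\<lambda>i. c * f i)"

lemma pscale_apply [simp]: "pscale c f i = c * f i"
  by (simp add: pscale_def)

lemma gr_scale_eq_pscale: "gr_scale = pscale"
  by (auto simp: gr_scale_def pscale_def fun_eq_iff)

interpretation pv: vector_space "pscale :: 'a::field \<Rightarrow> ('i \<Rightarrow> 'a) \<Rightarrow> ('i \<Rightarrow> 'a)"
  by unfold_locales (auto simp: pscale_def algebra_simps fun_eq_iff)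

interpretation pp: vector_space_pair "pscale :: 'a::field \<Rightarrow> ('i \<Rightarrow> 'a) \<Rightarrow> ('i \<Rightarrow> 'a)"
   "pscale :: 'a::field \<Rightarrow> ('j \<Rightarrow> 'a) \<Rightarrow> ('j \<Rightarrow> 'a)"
  by unfold_locales

lemma linear_pscaleI:
  fixes f :: "('i \<Rightarrow> 'a::field) \<Rightarrow> ('j \<Rightarrow> 'a)"
  assumes "\<And>x y. f (x + y) = f x + f y" "\<And>c x. f (pscale c x) = pscale c (f x)"
  shows "Vector_Spaces.linear pscale pscale f"
  unfolding Vector_Spaces.linear_iff by (auto simp: assms pv.vector_space_axioms)

lemma sum_fun_apply: "sum f A i = (\<Sum>a\<in>A. f a i)"
  by (induction A rule: infinite_finite_induct) auto

lemma dim_image_inj_on: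
  fixes f :: "('i \<Rightarrow> 'a::field) \<Rightarrow> ('j \<Rightarrow> 'a)"
  assumes lf: "Vector_Spaces.linear pscale pscale f" and inj: "inj_on f (pv.span S)"
  shows "pv.dim (f ` S) = pv.dim S"
proof -
  obtain B where B: "B \<subseteq> S" "pv.independent B" "S \<subseteq> pv.span B" "card B = pv.dim S"
    using pv.basis_exists by blast
  have injB: "inj_on f (pv.span B)"
    using inj_on_subset[OF inj pv.span_mono[OF B(1)]] .
  show ?thesis
  proof (rule pv.dim_unique)
    show "f ` B \<subseteq> f ` S" "f ` S \<subseteq> pv.span (f ` B)"
      using B(1) pp.linear_spans_image[OF lf B(3)] by auto
    show "pv.independent (f ` B)"
      using pp.linear_independent_injective_image[OF lf B(2) injB] .
    show "card (f ` B) = pv.dim S"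
      using card_image[OF inj_on_subset[OF injB pv.span_superset]] B(4) by simp
  qed
qed

lemma independent_imageI:
  fixes f :: "'b \<Rightarrow> ('i \<Rightarrow> 'a::field)"
  assumes fin: "finite B" and inj: "inj_on f B"
    and zero: "\<And>w. (\<Sum>b\<in>B. pscale (w b) (f b)) = 0 \<Longrightarrow> \<forall>b\<in>B. w b = 0"
  shows "pv.independent (f ` B)"
proof (rule pv.independent_if_scalars_zero)
  fix w x assume w: "(\<Sum>x\<in>f ` B. pscale (w x) x) = 0" and x: "x \<in> f ` B"
  have "(\<Sum>b\<in>B. pscale (w (f b)) (f b)) = 0"
    using w by (simp add: sum.reindex[OF inj])
  then have "\<forall>b\<in>B. w (f b) = 0" by (rule zero)
  then show "w x = 0" using x by blast
qed (use fin in simp)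

lemma span_Int_span_disjoint:
  fixes A C :: "('i \<Rightarrow> 'a::field) set"
  assumes ind: "pv.independent (A \<union> C)" and fin: "finite (A \<union> C)" and disj: "A \<inter> C = {}"
    and x: "x \<in> pv.span A" "x \<in> pv.span C"
  shows "x = 0"
proof -
  obtain u where u: "x = (\<Sum>v\<in>A. pscale (u v) v)"
    using x(1) pv.span_finite[of A] fin by auto
  obtain w where w: "x = (\<Sum>v\<in>C. pscale (w v) v)"
    using x(2) pv.span_finite[of C] fin by auto
  define c where "c v = (if v \<in> A then u v else - w v)" for v
  have "(\<Sum>v\<in>A \<union> C. pscale (c v) v) = (\<Sum>v\<in>A. pscale (c v) v) + (\<Sum>v\<in>C. pscale (c v) v)"
    using disj fin by (simp add: sum.union_disjoint)
  also have "\<dots> = x + (\<Sum>v\<in>C. - pscale (w v) v)"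
  proof -
    have "(\<Sum>v\<in>C. pscale (c v) v) = (\<Sum>v\<in>C. - pscale (w v) v)"
      using disj by (intro sum.cong) (auto simp: c_def pscale_def fun_eq_iff)
    then show ?thesis using u by (simp add: c_def)
  qed
  also have "\<dots> = 0" using w by (simp add: sum_negf)
  finally have "\<forall>v\<in>C. c v = 0"
    using pv.independentD[OF ind fin order_refl] by blast
  then have "\<forall>v\<in>C. w v = 0"
    using disj unfolding c_def by (metis disjoint_iff neg_equal_0_iff_equal)
  then show ?thesis using w by (simp add: pv.scale_zero_left)
qed

text \<open>Rank--nullity; only \<open>V\<close>, not the ambient function space, is finite-dimensional.\<close>
lemma dim_kernel_plus_dim_image:
  fixes f :: "('i \<Rightarrow> 'a::field) \<Rightarrow> ('j \<Rightarrow> 'a)"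
  assumes lf: "Vector_Spaces.linear pscale pscale f" and V: "pv.subspace V"
    and F: "finite F" "V \<subseteq> pv.span F"
  shows "pv.dim V = pv.dim {x\<in>V. f x = 0} + pv.dim (f ` V)"
proof -
  let ?Z = "{x\<in>V. f x = 0}"
  obtain A where A: "A \<subseteq> ?Z" "pv.independent A" "?Z \<subseteq> pv.span A" "card A = pv.dim ?Z"
    using pv.basis_exists by blast
  obtain B where B: "A \<subseteq> B" "B \<subseteq> V" "pv.independent B" "V \<subseteq> pv.span B"
    using pv.maximal_independent_subset_extend[of A V] A(1,2) by blast
  have finB: "finite B"
    using pv.independent_span_bound[OF F(1) B(3)] B(2) F(2) by auto
  define C where "C = B - A"
  have BAC: "B = A \<union> C" "A \<inter> C = {}" using B(1) C_def by auto
  have "inj_on f (pv.span C)"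
  proof (rule pp.linear_inj_on_iff_eq_0[OF lf pv.subspace_span, THEN iffD2], intro ballI impI)
    fix x assume x: "x \<in> pv.span C" "f x = 0"
    have "x \<in> V" using x(1) pv.span_minimal[OF _ V] B(2) C_def by blast
    then have "x \<in> pv.span A" using x(2) A(3) by blast
    then show "x = 0" using span_Int_span_disjoint[of A C x] B(3) finB x(1) BAC by simp
  qed
  moreover have "pv.independent C" using pv.independent_mono[OF B(3)] C_def by blast
  ultimately have dimC: "pv.dim (f ` C) = card C"
    using dim_image_inj_on[OF lf] pv.dim_eq_card_independent by metis
  have "f b = 0" if "b \<in> A" for b using that A(1) by blast
  then have "f ` B \<subseteq> pv.span (f ` C)"
    using BAC by (auto simp: pv.span_zero intro: pv.span_base)
  then have "f ` V \<subseteq> pv.span (f ` C)"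
    using pp.linear_spans_image[OF lf B(4)] pv.span_mono pv.span_span by blast
  moreover have "f ` C \<subseteq> pv.span (f ` V)"
    using C_def B(2) pv.span_superset by blast
  ultimately have "pv.span (f ` V) = pv.span (f ` C)"
    by (simp only: pv.span_eq)
  then have "pv.dim (f ` V) = pv.dim (f ` C)"
    by (rule pv.span_eq_dim)
  moreover have "pv.dim V = card B"
    using pv.dim_unique[OF B(2) B(4) B(3)] by simp
  ultimately show ?thesis
    using A(4) dimC BAC finB by (simp add: card_Un_disjoint)
qed

lemma dim_rows_le_dim_cols:
  fixes m :: "'i \<Rightarrow> 'j \<Rightarrow> 'a::field"
  assumes Y: "finite Y" and zero: "\<And>x y. y \<notin> Y \<Longrightarrow> m x y = 0"
  shows "pv.dim (m ` X) \<le> pv.dim ((\<lambda>y x. m x y) ` Y)"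
proof -
  let ?C = "(\<lambda>y x. m x y) ` Y"
  obtain B where B: "B \<subseteq> ?C" "pv.independent B" "?C \<subseteq> pv.span B" "card B = pv.dim ?C"
    using pv.basis_exists by blast
  have finB: "finite B" using B(1) Y finite_subset by blast
  have "\<forall>y\<in>Y. \<exists>u. (\<lambda>x. m x y) = (\<Sum>b\<in>B. pscale (u b) b)"
    using B(3) pv.span_finite[OF finB] by blast
  then obtain u where u: "\<And>y. y \<in> Y \<Longrightarrow> (\<lambda>x. m x y) = (\<Sum>b\<in>B. pscale (u y b) b)"
    by metis
  define row where "row b = (\<lambda>y. if y \<in> Y then u y b else 0)" for b
  have "(\<lambda>y. m x y) = (\<Sum>b\<in>B. pscale (b x) (row b))" for x
  proof
    fix y
    show "m x y = (\<Sum>b\<in>B. pscale (b x) (row b)) y"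
      using fun_cong[OF u, of y x] zero[of y x]
      by (cases "y \<in> Y") (simp_all add: row_def sum_fun_apply mult.commute)
  qed
  then have "(\<lambda>y. m x y) \<in> pv.span (row ` B)" for x
    by (metis (no_types, lifting) pv.span_sum pv.span_scale pv.span_base imageI)
  then have "m ` X \<subseteq> pv.span (row ` B)"
    by blast
  then have "pv.dim (m ` X) \<le> card (row ` B)"
    using pv.dim_le_card finB by blast
  also have "\<dots> \<le> card B" using card_image_le finB by blast
  finally show ?thesis using B(4) by simp
qed

lemma dim_rows_eq_dim_cols:
  fixes m :: "'i \<Rightarrow> 'j \<Rightarrow> 'a::field"
  assumes "finite X" "finite Y" "\<And>x y. x \<notin> X \<or> y \<notin> Y \<Longrightarrow> m x y = 0"
  shows "pv.dim (m ` X) = pv.dim ((\<lambda>y x. m x y) ` Y)"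
  using dim_rows_le_dim_cols[of Y m X] dim_rows_le_dim_cols[of X "\<lambda>y x. m x y" Y] assms
  by (meson antisym)

section \<open>Independence of characters and Artin's lemma\<close>

lemma characters_linearly_independent:
  fixes G :: "('m::monoid_mult \<Rightarrow> 'a::field) set"
  assumes fin: "finite G"
    and mult: "\<And>g x y. g \<in> G \<Longrightarrow> g (x * y) = g x * g y" and one: "\<And>g. g \<in> G \<Longrightarrow> g 1 = 1"
    and rel: "\<And>x. (\<Sum>g\<in>G. c g * g x) = 0"
  shows "\<forall>g\<in>G. c g = 0"
  using rel
proof (induction "card {g\<in>G. c g \<noteq> 0}" arbitrary: c rule: less_induct)
  case (less c)
  show ?case
  proof (rule ccontr)
    assume "\<not> (\<forall>g\<in>G. c g = 0)"
    then obtain g0 where g0: "g0 \<in> G" "c g0 \<noteq> 0" by blast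
    let ?S = "{g\<in>G. c g \<noteq> 0}"
    show False
    proof (cases "?S = {g0}")
      case True
      have "(\<Sum>g\<in>G. c g * g 1) = (\<Sum>g\<in>{g0}. c g * g 1)"
        using True fin g0 by (intro sum.mono_neutral_right) auto
      then show False using less.prems g0 one[OF g0(1)] by simp
    next
      case False
      then obtain g1 y where g1: "g1 \<in> G" "c g1 \<noteq> 0" "g1 y \<noteq> g0 y" using g0 by blast
      \<comment> \<open>Comparing the relation at \<open>y * x\<close> with \<open>g0 y\<close> times the relation at \<open>x\<close> kills \<open>g0\<close>.\<close>
      define c' where "c' g = c g * (g y - g0 y)" for g
      have "(\<Sum>g\<in>G. c' g * g x) = 0" for x
      proof -
        have "(\<Sum>g\<in>G. c' g * g x) = (\<Sum>g\<in>G. c g * g (y * x)) - g0 y * (\<Sum>g\<in>G. c g * g x)"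
          by (simp add: c'_def sum_distrib_left sum_subtractf[symmetric] algebra_simps mult)
        then show ?thesis using less.prems by simp
      qed
      moreover have "card {g\<in>G. c' g \<noteq> 0} < card ?S"
      proof -
        have "{g\<in>G. c' g \<noteq> 0} \<subseteq> ?S - {g0}" by (auto simp: c'_def)
        then have "card {g\<in>G. c' g \<noteq> 0} \<le> card (?S - {g0})"
          using fin by (intro card_mono) auto
        also have "\<dots> < card ?S" using g0 fin by (intro psubset_card_mono) auto
        finally show ?thesis .
      qed
      ultimately have "c' g1 = 0" using less.hyps g1(1) by blast
      then show False using g1 by (simp add: c'_def)
    qed
  qed
qed

lemma Gal_relation_conj:
  assumes h: "h \<in> Gal K" and g: "g \<in> Gal K"
    and rel: "\<forall>g\<in>Gal K. (\<Sum>b\<in>B. d b * g b) = 0"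
  shows "(\<Sum>b\<in>B. h (d b) * g b) = 0"
proof -
  have ha: "field_aut h" using h Gal_aut by blast
  have hh: "h (hinv h z) = z" for z
    using ha field_aut_bij by (metis bij_is_surj surj_f_inv_f)
  have "(\<Sum>b\<in>B. h (d b) * g b) = h (\<Sum>b\<in>B. d b * (hinv h \<circ> g) b)"
    by (simp add: field_aut_sum[OF ha] field_aut_mult[OF ha] hh)
  also have "\<dots> = 0"
  proof -
    have "(\<Sum>b\<in>B. d b * (hinv h \<circ> g) b) = 0" using rel Gal_comp[OF Gal_inv[OF h] g] by blast
    then show ?thesis using field_aut_0[OF ha] by simp
  qed
  finally show ?thesis .
qed

lemma Gal_conjugates_independent:
  fixes K :: "'a::field set"
  assumes gal: "finite_galois K" and finB: "finite B" and ind: "K_indep K B"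
    and rel: "\<forall>g\<in>Gal K. (\<Sum>b\<in>B. c b * g b) = 0"
  shows "\<forall>b\<in>B. c b = 0"
  using rel
proof (induction "card {b\<in>B. c b \<noteq> 0}" arbitrary: c rule: less_induct)
  case (less c)
  show ?case
  proof (rule ccontr)
    assume "\<not> (\<forall>b\<in>B. c b = 0)"
    then obtain b0 where b0: "b0 \<in> B" "c b0 \<noteq> 0" by blast
    define d where "d b = c b / c b0" for b
    have d0: "d b0 = 1" using b0 by (simp add: d_def)
    have reld: "\<forall>g\<in>Gal K. (\<Sum>b\<in>B. d b * g b) = 0"
      using less.prems by (simp add: d_def sum_divide_distrib[symmetric])
    \<comment> \<open>Each \<open>h (d b) - d b\<close> satisfies the relation, with \<open>b0\<close> dropped from the support.\<close>
    have "h (d b) = d b" if h: "h \<in> Gal K" and b: "b \<in> B" for h b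
    proof -
      define e where "e b = h (d b) - d b" for b
      have "\<forall>g\<in>Gal K. (\<Sum>b\<in>B. e b * g b) = 0"
        using Gal_relation_conj[OF h _ reld] reld
        by (simp add: e_def left_diff_distrib sum_subtractf)
      moreover have "card {b\<in>B. e b \<noteq> 0} < card {b\<in>B. c b \<noteq> 0}"
      proof -
        have "d b = 0" if "c b = 0" for b using that by (simp add: d_def)
        then have "{b\<in>B. e b \<noteq> 0} \<subseteq> {b\<in>B. c b \<noteq> 0} - {b0}"
          using d0 field_aut_1[OF Gal_aut[OF h]] field_aut_0[OF Gal_aut[OF h]] by (auto simp: e_def)
        then have "card {b\<in>B. e b \<noteq> 0} \<le> card ({b\<in>B. c b \<noteq> 0} - {b0})"
          using finB by (intro card_mono) auto
        also have "\<dots> < card {b\<in>B. c b \<noteq> 0}" using b0 finB by (intro psubset_card_mono) auto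
        finally show ?thesis .
      qed
      ultimately have "e b = 0" using less.hyps b by blast
      then show ?thesis by (simp add: e_def)
    qed
    then have "\<forall>b\<in>B. d b \<in> K" using fixed_field_Gal[OF gal] by blast
    moreover have "(\<Sum>b\<in>B. d b * b) = 0" using reld Gal_id[of K] by fastforce
    ultimately have "d b0 = 0" using ind finB b0(1) unfolding K_indep_def by blast
    then show False using d0 by simp
  qed
qed

lemma subfield_ofD:
  assumes "subfield_of K"
  shows "0 \<in> K" "1 \<in> K" "x \<in> K \<Longrightarrow> y \<in> K \<Longrightarrow> x + y \<in> K" "x \<in> K \<Longrightarrow> y \<in> K \<Longrightarrow> x * y \<in> K"
    "x \<in> K \<Longrightarrow> - x \<in> K" "x \<in> K \<Longrightarrow> y \<in> K \<Longrightarrow> x / y \<in> K"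
  using assms unfolding subfield_of_def by (auto simp: divide_inverse)

lemma subfield_sum: "subfield_of K \<Longrightarrow> (\<And>t. t \<in> T \<Longrightarrow> f t \<in> K) \<Longrightarrow> sum f T \<in> K"
  by (induction T rule: infinite_finite_induct) (auto simp: subfield_ofD)

lemma K_span_finite:
  assumes K: "subfield_of K" and S: "finite S"
  shows "K_span K S = {x. \<exists>c. (\<forall>t\<in>S. c t \<in> K) \<and> x = (\<Sum>t\<in>S. c t * t)}"
proof (intro equalityI subsetI)
  fix x assume "x \<in> K_span K S"
  then obtain T c where T: "finite T" "T \<subseteq> S" "\<forall>t\<in>T. c t \<in> K" "x = (\<Sum>t\<in>T. c t * t)"
    unfolding K_span_def by blast
  define c' where "c' t = (if t \<in> T then c t else 0)" for t
  have "(\<Sum>t\<in>S. c' t * t) = (\<Sum>t\<in>T. c' t * t)"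
    using T S by (intro sum.mono_neutral_right) (auto simp: c'_def)
  then have "x = (\<Sum>t\<in>S. c' t * t)"
    using T by (simp add: c'_def)
  then show "x \<in> {x. \<exists>c. (\<forall>t\<in>S. c t \<in> K) \<and> x = (\<Sum>t\<in>S. c t * t)}"
    using T(3) subfield_ofD(1)[OF K] by (auto simp: c'_def intro!: exI[of _ c'])
qed (use S in \<open>auto simp: K_span_def\<close>)

lemma K_span_mono: "S \<subseteq> S' \<Longrightarrow> K_span K S \<subseteq> K_span K S'"
  unfolding K_span_def by blast

lemma K_span_base: "subfield_of K \<Longrightarrow> s \<in> S \<Longrightarrow> s \<in> K_span K S"
  unfolding K_span_def
  by (intro CollectI exI[of _ "{s}"] exI[of _ "\<lambda>_. 1"]) (auto simp: subfield_ofD)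

lemma K_span_lincomb:
  assumes K: "subfield_of K" and S: "finite S"
    and y: "\<forall>t\<in>T. y t \<in> K_span K S" and c: "\<forall>t\<in>T. c t \<in> K"
  shows "(\<Sum>t\<in>T. c t * y t) \<in> K_span K S"
proof -
  have "\<forall>t\<in>T. \<exists>d. (\<forall>b\<in>S. d b \<in> K) \<and> y t = (\<Sum>b\<in>S. d b * b)"
    using y unfolding K_span_finite[OF K S] by blast
  then obtain d where d: "\<And>t. t \<in> T \<Longrightarrow> (\<forall>b\<in>S. d t b \<in> K) \<and> y t = (\<Sum>b\<in>S. d t b * b)"
    by (rule bchoice[THEN exE]) blast
  have "(\<Sum>t\<in>T. c t * y t) = (\<Sum>t\<in>T. \<Sum>b\<in>S. c t * d t b * b)"
    using d by (simp add: sum_distrib_left mult.assoc)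
  also have "\<dots> = (\<Sum>b\<in>S. (\<Sum>t\<in>T. c t * d t b) * b)"
    by (subst sum.swap) (simp add: sum_distrib_right)
  moreover have "\<forall>b\<in>S. (\<Sum>t\<in>T. c t * d t b) \<in> K"
    using d c by (auto intro!: subfield_sum[OF K] subfield_ofD(4)[OF K])
  ultimately show ?thesis
    unfolding K_span_finite[OF K S] by (intro CollectI exI[of _ "\<lambda>b. \<Sum>t\<in>T. c t * d t b"]) simp
qed

lemma K_span_subset:
  assumes K: "subfield_of K" and S: "finite S" and S': "S' \<subseteq> K_span K S"
  shows "K_span K S' \<subseteq> K_span K S"
proof
  fix x assume "x \<in> K_span K S'"
  then obtain T c where T: "T \<subseteq> S'" "\<forall>t\<in>T. c t \<in> K" "x = (\<Sum>t\<in>T. c t * t)"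
    unfolding K_span_def by blast
  then show "x \<in> K_span K S"
    using K_span_lincomb[OF K S, of T "\<lambda>t. t" c] S' by blast
qed

lemma K_indepD:
  assumes "K_indep K B" "finite T" "T \<subseteq> B" "\<forall>t\<in>T. c t \<in> K" "(\<Sum>t\<in>T. c t * t) = 0" "t \<in> T"
  shows "c t = 0"
  using assms unfolding K_indep_def by blast

lemma K_span_insert_dependent:
  assumes K: "subfield_of K" and ind: "K_indep K B" and dep: "\<not> K_indep K (insert s B)"
  shows "s \<in> K_span K B"
proof -
  obtain T c t0 where T: "finite T" "T \<subseteq> insert s B" "\<forall>t\<in>T. c t \<in> K"
      "(\<Sum>t\<in>T. c t * t) = 0" "t0 \<in> T" "c t0 \<noteq> 0"
    using dep unfolding K_indep_def by blast
  have split: "(\<Sum>t\<in>T. c t * t) = (if s \<in> T then c s * s else 0) + (\<Sum>t\<in>T - {s}. c t * t)"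
    using T(1) by (simp add: sum.remove)
  \<comment> \<open>By independence of \<open>B\<close> the relation involves \<open>s\<close>, so it can be solved for \<open>s\<close>.\<close>
  have s: "s \<in> T \<and> c s \<noteq> 0"
  proof (rule ccontr)
    assume no_s: "\<not> (s \<in> T \<and> c s \<noteq> 0)"
    then have "(if s \<in> T then c s * s else 0) = 0" by auto
    then have "(\<Sum>t\<in>T - {s}. c t * t) = 0"
      using split T(4) by simp
    moreover have "t0 \<in> T - {s}" "T - {s} \<subseteq> B" using no_s T(2,5,6) by auto
    ultimately have "c t0 = 0"
      using K_indepD[OF ind, of "T - {s}" c t0] T(1,3) by blast
    then show False using T(6) by blast
  qed
  have "c s * s = - (\<Sum>t\<in>T - {s}. c t * t)"
    using split T(4) s by (simp add: eq_neg_iff_add_eq_0)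
  then have "s = (\<Sum>t\<in>T - {s}. (- c t / c s) * t)"
    using s by (simp add: sum_divide_distrib[symmetric] sum_negf field_simps)
  moreover have "\<forall>t\<in>T - {s}. - c t / c s \<in> K"
    using T(3) s by (simp add: subfield_ofD[OF K])
  ultimately show ?thesis
    unfolding K_span_def using T(1,2)
    by (intro CollectI exI[of _ "T - {s}"] exI[of _ "\<lambda>t. - c t / c s"]) auto
qed

lemma K_basis_of_K_span:
  assumes K: "subfield_of K" and V: "finite V"
  obtains B where "B \<subseteq> V" "K_is_basis K (K_span K V) B"
proof -
  let ?P = "\<lambda>B. B \<subseteq> V \<and> K_indep K B"
  have "\<exists>B. finite B \<and> maximal B ?P"
  proof (rule maximal_exists[of ?P "card V" "{}"])
    show "\<And>B. ?P B \<Longrightarrow> finite B \<and> card B \<le> card V"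
      using V by (meson card_mono finite_subset)
    show "?P {}" unfolding K_indep_def by auto
  qed
  then obtain B where "finite B" "maximal B ?P" by blast
  then have B: "B \<subseteq> V" "K_indep K B" "finite B"
    and max: "\<And>s. s \<in> V \<Longrightarrow> K_indep K (insert s B) \<Longrightarrow> s \<in> B"
    unfolding maximal_def by auto
  have "V \<subseteq> K_span K B"
    using K_span_insert_dependent[OF K B(2)] K_span_base[OF K] max by blast
  then have "K_span K B = K_span K V"
    using K_span_subset[OF K B(3)] K_span_mono[OF B(1)] by blast
  then show thesis
    using that B K_span_base[OF K] unfolding K_is_basis_def by blast
qed

definition conjugates :: "'a::field set \<Rightarrow> 'a \<Rightarrow> (('a \<Rightarrow> 'a) \<Rightarrow> 'a)" where
  "conjugates K x = (\<lambda>g. if g \<in> Gal K then g x else 0)"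

lemma conjugates_lincomb:
  assumes "\<forall>t\<in>T. c t \<in> K"
  shows "conjugates K (\<Sum>t\<in>T. c t * t) = (\<Sum>t\<in>T. pscale (c t) (conjugates K t))"
proof
  fix g
  show "conjugates K (\<Sum>t\<in>T. c t * t) g = (\<Sum>t\<in>T. pscale (c t) (conjugates K t)) g"
    using assms
    by (cases "g \<in> Gal K")
      (auto simp: conjugates_def sum_fun_apply field_aut_sum[OF Gal_aut]
        field_aut_mult[OF Gal_aut] Gal_fix intro!: sum.cong)
qed

lemma conjugates_K_span:
  assumes "x \<in> K_span K S"
  shows "conjugates K x \<in> pv.span (conjugates K ` S)"
proof -
  obtain T c where T: "T \<subseteq> S" "\<forall>t\<in>T. c t \<in> K" "x = (\<Sum>t\<in>T. c t * t)"
    using assms unfolding K_span_def by blast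
  have "(\<Sum>t\<in>T. pscale (c t) (conjugates K t)) \<in> pv.span (conjugates K ` S)"
    using T(1) by (intro pv.span_sum pv.span_scale pv.span_base) auto
  then show ?thesis using T(2,3) by (simp add: conjugates_lincomb)
qed

lemma inj_conjugates: "inj (conjugates K)"
  by (rule injI) (metis Gal_id conjugates_def id_apply)

lemma independent_conjugates:
  assumes gal: "finite_galois K" and B: "finite B" "K_indep K B"
  shows "pv.independent (conjugates K ` B)"
proof (rule independent_imageI[OF B(1) inj_on_subset[OF inj_conjugates subset_UNIV]])
  fix w assume w: "(\<Sum>b\<in>B. pscale (w b) (conjugates K b)) = 0"
  have "(\<Sum>b\<in>B. w b * g b) = 0" if "g \<in> Gal K" for g
    using fun_cong[OF w, of g] that by (simp add: sum_fun_apply conjugates_def)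
  then have "\<forall>g\<in>Gal K. (\<Sum>b\<in>B. w b * g b) = 0" by blast
  then show "\<forall>b\<in>B. w b = 0" by (rule Gal_conjugates_independent[OF gal B])
qed

lemma K_dim_K_span:
  assumes gal: "finite_galois K" and V: "finite V"
  shows "K_dim K (K_span K V) = pv.dim (conjugates K ` V)"
proof -
  have K: "subfield_of K" using gal unfolding finite_galois_def by blast
  have "card B = pv.dim (conjugates K ` V)" if B: "K_is_basis K (K_span K V) B" for B
  proof -
    have finB: "finite B" and indB: "K_indep K B" and spanB: "K_span K B = K_span K V"
      using B unfolding K_is_basis_def by auto
    have "conjugates K ` V \<subseteq> pv.span (conjugates K ` B)"
      using spanB K_span_base[OF K] conjugates_K_span by blast
    moreover have "conjugates K ` B \<subseteq> pv.span (conjugates K ` V)"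
      using spanB K_span_base[OF K] conjugates_K_span by blast
    ultimately have "pv.span (conjugates K ` V) = pv.span (conjugates K ` B)"
      by (simp only: pv.span_eq)
    then have "pv.dim (conjugates K ` V) = pv.dim (conjugates K ` B)"
      by (rule pv.span_eq_dim)
    also have "\<dots> = card B"
      using pv.dim_eq_card_independent[OF independent_conjugates[OF gal finB indB]]
        card_image[OF inj_on_subset[OF inj_conjugates subset_UNIV]] by simp
    finally show ?thesis by simp
  qed
  moreover obtain B where "K_is_basis K (K_span K V) B"
    using K_basis_of_K_span[OF K V] by blast
  then have "K_dim K (K_span K V) = card (SOME B. K_is_basis K (K_span K V) B)"
    and "K_is_basis K (K_span K V) (SOME B. K_is_basis K (K_span K V) B)"
    unfolding K_dim_def by (auto intro: someI)
  ultimately show ?thesis by simp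
qed

section \<open>Matrix rank as a dimension in a function space\<close>

lemma set_eq_nth_image: "set xs = (\<lambda>i. xs ! i) ` {..<length xs}"
  by (metis atLeast_upt list.set_map map_nth)

definition vec_fun :: "nat \<Rightarrow> 'a::zero vec \<Rightarrow> nat \<Rightarrow> 'a" where
  "vec_fun n v = (\<lambda>i. if i < n then v $ i else 0)"

lemma inj_on_vec_fun: "inj_on (vec_fun n) (carrier_vec n)"
proof
  fix x y assume xy: "x \<in> carrier_vec n" "y \<in> carrier_vec n" "vec_fun n x = vec_fun n y"
  show "x = y"
  proof (rule eq_vecI)
    show "x $ i = y $ i" if "i < dim_vec y" for i
    proof -
      have "i < n" using that xy(2) by simp
      then show ?thesis using fun_cong[OF xy(3), of i] by (simp add: vec_fun_def)
    qed
  qed (use xy in auto)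
qed

context vec_space
begin

lemma vec_fun_lincomb:
  assumes "S \<subseteq> carrier_vec n"
  shows "vec_fun n (lincomb w S) = (\<Sum>s\<in>S. pscale (w s) (vec_fun n s))"
  using assms by (auto simp: vec_fun_def sum_fun_apply lincomb_index fun_eq_iff)

lemma vec_fun_span:
  assumes S: "finite S" "S \<subseteq> carrier_vec n" and v: "v \<in> span S"
  shows "vec_fun n v \<in> pv.span (vec_fun n ` S)"
proof -
  obtain w where "lincomb w S = v" using finite_in_span[OF S v] by blast
  then have "vec_fun n v = (\<Sum>s\<in>S. pscale (w s) (vec_fun n s))"
    using vec_fun_lincomb[OF S(2)] by blast
  also have "\<dots> \<in> pv.span (vec_fun n ` S)"
    by (intro pv.span_sum pv.span_scale pv.span_base) auto
  finally show ?thesis .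
qed

lemma independent_vec_fun:
  assumes S: "finite S" "S \<subseteq> carrier_vec n" "lin_indpt S"
  shows "pv.independent (vec_fun n ` S)"
proof (rule independent_imageI[OF S(1) inj_on_subset[OF inj_on_vec_fun S(2)]])
  fix w assume "(\<Sum>s\<in>S. pscale (w s) (vec_fun n s)) = 0"
  then have "vec_fun n (lincomb w S) = vec_fun n (0\<^sub>v n)"
    using vec_fun_lincomb[OF S(2)] by (simp add: vec_fun_def fun_eq_iff)
  then have "lincomb w S = 0\<^sub>v n"
    using inj_on_vec_fun lincomb_closed[OF S(2)] by (auto dest: inj_onD)
  then show "\<forall>s\<in>S. w s = 0"
    using lin_dep_crit[OF S(1) order_refl] S(3) by fastforce
qed

lemma rank_eq_dim_cols:
  assumes A: "A \<in> carrier_mat n nc"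
  shows "rank A = pv.dim ((\<lambda>j. vec_fun n (col A j)) ` {..<nc})"
proof -
  let ?P = "\<lambda>T. T \<subseteq> set (cols A) \<and> lin_indpt T"
  have cols: "set (cols A) = col A ` {..<nc}" "set (cols A) \<subseteq> carrier_vec n"
    using A cols_dim unfolding cols_def by auto
  obtain S where S: "finite S" "maximal S ?P"
    using maximal_exists_superset[of "set (cols A)" ?P "{}"] by (auto simp: lin_dep_def)
  have SA: "S \<subseteq> set (cols A)" "lin_indpt S" "S \<subseteq> carrier_vec n"
    using S(2) cols(2) unfolding maximal_def by auto
  have "c \<in> span S" if c: "c \<in> set (cols A)" for c
  proof (cases "c \<in> S")
    case False
    then have "lin_dep (S \<union> {c})"
      using S(2) SA(1) c unfolding maximal_def by blast
    then show ?thesis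
      using lin_dep_iff_in_span[OF SA(3) SA(2) _ False] c cols(2) by blast
  qed (use span_mem SA(3) in blast)
  then have "vec_fun n ` set (cols A) \<subseteq> pv.span (vec_fun n ` S)"
    using vec_fun_span[OF S(1) SA(3)] by blast
  then have "pv.dim (vec_fun n ` set (cols A)) = card (vec_fun n ` S)"
    using SA(1) independent_vec_fun[OF S(1) SA(3) SA(2)] by (intro pv.dim_unique) auto
  also have "\<dots> = card S"
    using card_image[OF inj_on_subset[OF inj_on_vec_fun SA(3)]] .
  finally show ?thesis
    using rank_card_indpt[OF A S(2)] cols(1) by (simp add: image_image)
qed

end

section \<open>The skew group ring\<close>

definition delta :: "('a \<Rightarrow> 'a) \<Rightarrow> (('a \<Rightarrow> 'a) \<Rightarrow> 'a::field)" where
  "delta h = (\<lambda>g. if g = h then 1 else 0)"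

definition coords :: "('a \<Rightarrow> 'a) list \<Rightarrow> (('a \<Rightarrow> 'a) \<Rightarrow> 'a::field) \<Rightarrow> nat \<Rightarrow> 'a" where
  "coords gs f = (\<lambda>i. if i < length gs then f (gs ! i) else 0)"

lemma delta_in_grp_ring: "h \<in> G \<Longrightarrow> delta h \<in> grp_ring G"
  by (auto simp: delta_def grp_ring_def)

lemma subspace_grp_ring: "pv.subspace (grp_ring G)"
  unfolding pv.subspace_def grp_ring_def by auto

lemma grp_ring_eq_sum_delta:
  assumes "finite G" "f \<in> grp_ring G"
  shows "f = (\<Sum>g\<in>G. pscale (f g) (delta g))"
proof
  fix k
  have "(\<Sum>g\<in>G. pscale (f g) (delta g)) k = (\<Sum>g\<in>G. if k = g then f g else 0)"
    by (auto simp: sum_fun_apply delta_def intro!: sum.cong)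
  then show "f k = (\<Sum>g\<in>G. pscale (f g) (delta g)) k"
    using assms by (cases "k \<in> G") (simp_all add: grp_ring_def)
qed

lemma grp_ring_subset_span_delta:
  assumes "finite G"
  shows "grp_ring G \<subseteq> pv.span (delta ` G)"
proof
  fix f assume "f \<in> grp_ring G"
  then have "f = (\<Sum>g\<in>G. pscale (f g) (delta g))"
    by (rule grp_ring_eq_sum_delta[OF assms])
  also have "\<dots> \<in> pv.span (delta ` G)"
    by (intro pv.span_sum pv.span_scale pv.span_base) auto
  finally show "f \<in> pv.span (delta ` G)" .
qed

lemma linear_coords: "Vector_Spaces.linear pscale pscale (coords gs)"
  by (rule linear_pscaleI) (auto simp: coords_def fun_eq_iff)

lemma inj_on_coords:
  assumes "set gs = G"
  shows "inj_on (coords gs) (grp_ring G)"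
  unfolding pp.linear_inj_on_iff_eq_0[OF linear_coords subspace_grp_ring]
proof (intro ballI impI ext)
  fix u g assume u: "u \<in> grp_ring G" and u0: "coords gs u = 0"
  have "u (gs ! i) = 0" if "i < length gs" for i
    using that fun_cong[OF u0, of i] by (simp add: coords_def)
  then show "u g = 0 g"
    using u assms by (cases "g \<in> G") (auto simp: grp_ring_def in_set_conv_nth)
qed

lemma rank_mat_eq_dim:
  assumes gs: "set gs = G" and F: "F ` {..<nc} \<subseteq> grp_ring G"
  shows "vec_space.rank (length gs) (mat (length gs) nc (\<lambda>(i, j). F j (gs ! i)))
    = pv.dim (F ` {..<nc})"
proof -
  let ?A = "mat (length gs) nc (\<lambda>(i, j). F j (gs ! i))"
  have "(\<lambda>j. vec_fun (length gs) (col ?A j)) ` {..<nc} = coords gs ` F ` {..<nc}"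
    by (auto simp: vec_fun_def coords_def fun_eq_iff image_image intro!: image_cong)
  moreover have "inj_on (coords gs) (pv.span (F ` {..<nc}))"
    using inj_on_subset[OF inj_on_coords[OF gs]] pv.span_minimal[OF F subspace_grp_ring] .
  ultimately show ?thesis
    using vec_space.rank_eq_dim_cols[of ?A "length gs" nc] dim_image_inj_on[OF linear_coords]
    by simp
qed

lemma linear_comp_prod: "Vector_Spaces.linear pscale pscale (\<lambda>f. comp_prod G f a)"
proof (rule linear_pscaleI)
  have if_add: "(if P then (u + v) * z else 0) = (if P then u * z else 0) + (if P then v * z else 0)"
    and if_mult: "(if P then c * u * z else 0) = c * (if P then u * z else 0)"
    for P and c u v z :: 'a
    by (simp_all add: distrib_right)
  show "comp_prod G (x + y) a = comp_prod G x a + comp_prod G y a" for x y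
    by (rule ext) (simp add: comp_prod_def if_add sum.distrib cong: if_cong)
  show "comp_prod G (pscale c x) a = pscale c (comp_prod G x a)" for c x
    by (rule ext) (simp add: comp_prod_def if_mult sum_distrib_left cong: if_cong)
qed

lemma L_quot_dim_Ann:
  assumes fin: "finite G"
  shows "L_quot_dim (grp_ring G) (Ann G a) = pv.dim ((\<lambda>h. comp_prod G (delta h) a) ` G)"
proof -
  let ?T = "\<lambda>f. comp_prod G f a"
  have "Ann G a = {f \<in> grp_ring G. ?T f = 0}"
    unfolding Ann_def by (simp add: zero_fun_def)
  then have "L_quot_dim (grp_ring G) (Ann G a) = pv.dim (?T ` grp_ring G)"
    using dim_kernel_plus_dim_image[OF linear_comp_prod[of G a] subspace_grp_ring _
        grp_ring_subset_span_delta[OF fin]] fin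
    unfolding L_quot_dim_def gr_scale_eq_pscale by simp
  also have "\<dots> = pv.dim (?T ` delta ` G)"
  proof (rule pv.span_eq_dim)
    have "?T ` grp_ring G \<subseteq> pv.span (?T ` delta ` G)"
      using pp.linear_spans_image[OF linear_comp_prod[of G a] grp_ring_subset_span_delta[OF fin]] .
    moreover have "?T ` delta ` G \<subseteq> pv.span (?T ` grp_ring G)"
      using delta_in_grp_ring by (blast intro: pv.span_base)
    ultimately show "pv.span (?T ` grp_ring G) = pv.span (?T ` delta ` G)"
      by (simp only: pv.span_eq)
  qed
  finally show ?thesis by (simp add: image_image)
qed

lemma comp_prod_delta:
  assumes fin: "finite (Gal K)" and h: "h \<in> Gal K" and k: "k \<in> Gal K"
  shows "comp_prod (Gal K) (delta h) a k = h (a (hinv h \<circ> k))"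
proof -
  have "comp_prod (Gal K) (delta h) a k
      = (\<Sum>g\<in>Gal K. \<Sum>h'\<in>Gal K. if g \<circ> h' = k then delta h g * g (a h') else 0)"
    using k by (simp add: comp_prod_def)
  also have "\<dots>
      = (\<Sum>g\<in>Gal K. if h = g then (\<Sum>h'\<in>Gal K. if h \<circ> h' = k then h (a h') else 0) else 0)"
    by (rule sum.cong) (auto simp: delta_def intro!: sum.neutral sum.cong)
  also have "\<dots> = (\<Sum>h'\<in>Gal K. if h \<circ> h' = k then h (a h') else 0)"
    using fin h by simp
  also have "\<dots> = (\<Sum>h'\<in>Gal K. if hinv h \<circ> k = h' then h (a h') else 0)"
    by (intro sum.cong refl) (simp add: Gal_comp_eq_iff[OF h] eq_commute[of "hinv h \<circ> k"])
  also have "\<dots> = h (a (hinv h \<circ> k))"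
    using fin Gal_comp[OF Gal_inv[OF h] k] by simp
  finally show ?thesis .
qed

lemma gr_act_delta:
  assumes "finite G" "h \<in> G"
  shows "gr_act G (delta h) y = h y"
proof -
  have "gr_act G (delta h) y = (\<Sum>g\<in>G. if h = g then g y else 0)"
    unfolding gr_act_def delta_def by (intro sum.cong) auto
  then show ?thesis using assms by simp
qed

lemma gr_act_comp_prod:
  assumes fin: "finite (Gal K)"
  shows "gr_act (Gal K) (comp_prod (Gal K) f a) x = gr_act (Gal K) f (gr_act (Gal K) a x)"
proof -
  let ?G = "Gal K"
  have "gr_act ?G (comp_prod ?G f a) x
      = (\<Sum>k\<in>?G. \<Sum>g\<in>?G. \<Sum>h\<in>?G. if g \<circ> h = k then f g * g (a h) * k x else 0)"
    unfolding gr_act_def comp_prod_def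
    by (intro sum.cong refl) (simp add: sum_distrib_right if_distrib[of "\<lambda>t. t * _"] cong: if_cong)
  also have "\<dots> = (\<Sum>g\<in>?G. \<Sum>h\<in>?G. \<Sum>k\<in>?G. if g \<circ> h = k then f g * g (a h) * k x else 0)"
    by (subst sum.swap) (rule sum.cong[OF refl], rule sum.swap)
  also have "\<dots> = (\<Sum>g\<in>?G. \<Sum>h\<in>?G. f g * g (a h) * (g \<circ> h) x)"
    using fin by (intro sum.cong refl) (simp add: sum.delta Gal_comp)
  also have "\<dots> = gr_act ?G f (gr_act ?G a x)"
    unfolding gr_act_def
    by (intro sum.cong refl) (simp add: field_aut_sum[OF Gal_aut] field_aut_mult[OF Gal_aut]
        sum_distrib_left mult.assoc)
  finally show ?thesis .
qed

lemma gr_act_K_lincomb: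
  assumes "\<forall>t\<in>T. c t \<in> K"
  shows "gr_act (Gal K) u (\<Sum>t\<in>T. c t * f t) = (\<Sum>t\<in>T. c t * gr_act (Gal K) u (f t))"
proof -
  have "gr_act (Gal K) u (\<Sum>t\<in>T. c t * f t) = (\<Sum>g\<in>Gal K. \<Sum>t\<in>T. u g * (c t * g (f t)))"
    unfolding gr_act_def using assms
    by (intro sum.cong refl)
      (simp add: field_aut_sum[OF Gal_aut] field_aut_mult[OF Gal_aut] Gal_fix sum_distrib_left)
  then show ?thesis
    unfolding gr_act_def by (simp add: sum_distrib_left sum.swap[of _ "Gal K"] algebra_simps)
qed

text \<open>\<open>L[G]\<close> acts faithfully on \<open>L\<close>, by independence of the characters in \<open>G\<close>.\<close>
lemma gr_act_eq_0_imp_eq_0: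
  assumes fin: "finite (Gal K)" and span: "K_span K S = UNIV"
    and u: "u \<in> grp_ring (Gal K)" and zero: "\<And>s. s \<in> S \<Longrightarrow> gr_act (Gal K) u s = 0"
  shows "u = 0"
proof -
  have "(\<Sum>g\<in>Gal K. u g * g x) = 0" for x
  proof -
    have "x \<in> K_span K S" using span by simp
    then obtain T c where "T \<subseteq> S" "\<forall>t\<in>T. c t \<in> K" "x = (\<Sum>t\<in>T. c t * t)"
      unfolding K_span_def by blast
    then have "gr_act (Gal K) u x = (\<Sum>t\<in>T. c t * gr_act (Gal K) u t)"
      using gr_act_K_lincomb[of T c K u "\<lambda>t. t"] by simp
    also have "\<dots> = 0" using \<open>T \<subseteq> S\<close> zero by (auto intro!: sum.neutral)
    finally show ?thesis by (simp add: gr_act_def)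
  qed
  then have "\<forall>g\<in>Gal K. u g = 0"
    by (intro characters_linearly_independent[OF fin])
      (auto simp: field_aut_mult field_aut_1 Gal_aut)
  then show "u = 0" using u by (auto simp: grp_ring_def fun_eq_iff)
qed

lemma range_gr_act:
  assumes K: "subfield_of K" and S: "finite S" and span: "K_span K S = UNIV"
  shows "range (gr_act (Gal K) u) = K_span K (gr_act (Gal K) u ` S)"
proof (intro equalityI subsetI)
  fix y assume "y \<in> range (gr_act (Gal K) u)"
  then obtain x where y: "y = gr_act (Gal K) u x" by blast
  have "x \<in> K_span K S" using span by simp
  then obtain T c where T: "T \<subseteq> S" "\<forall>t\<in>T. c t \<in> K" "x = (\<Sum>t\<in>T. c t * t)"
    unfolding K_span_def by blast
  have "y = (\<Sum>t\<in>T. c t * gr_act (Gal K) u t)"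
    using y T gr_act_K_lincomb[of T c K u "\<lambda>t. t"] by simp
  moreover have "\<forall>t\<in>T. gr_act (Gal K) u t \<in> K_span K (gr_act (Gal K) u ` S)"
    using T(1) K_span_base[OF K] by blast
  ultimately show "y \<in> K_span K (gr_act (Gal K) u ` S)"
    using K_span_lincomb[OF K finite_imageI[OF S] _ T(2)] by simp
next
  fix y assume "y \<in> K_span K (gr_act (Gal K) u ` S)"
  then obtain T c where T: "T \<subseteq> gr_act (Gal K) u ` S" "\<forall>t\<in>T. c t \<in> K" "y = (\<Sum>t\<in>T. c t * t)"
    unfolding K_span_def by blast
  then obtain T' where T': "T' \<subseteq> S" "inj_on (gr_act (Gal K) u) T'" "T = gr_act (Gal K) u ` T'"
    unfolding subset_image_inj by blast
  have "y = (\<Sum>t\<in>T'. c (gr_act (Gal K) u t) * gr_act (Gal K) u t)"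
    using T(3) T'(2,3) by (simp add: sum.reindex)
  also have "\<dots> = gr_act (Gal K) u (\<Sum>t\<in>T'. c (gr_act (Gal K) u t) * t)"
    using T(2) T'(3) gr_act_K_lincomb[of T' "\<lambda>t. c (gr_act (Gal K) u t)" K u "\<lambda>t. t"] by simp
  finally show "y \<in> range (gr_act (Gal K) u)" by blast
qed

definition gr_act_list :: "('a \<Rightarrow> 'a) set \<Rightarrow> 'a list \<Rightarrow> (('a \<Rightarrow> 'a) \<Rightarrow> 'a::field) \<Rightarrow> nat \<Rightarrow> 'a" where
  "gr_act_list G bs u = (\<lambda>j. if j < length bs then gr_act G u (bs ! j) else 0)"

lemma linear_gr_act_list: "Vector_Spaces.linear pscale pscale (gr_act_list G bs)"
  by (rule linear_pscaleI)
    (auto simp: gr_act_list_def gr_act_def fun_eq_iff sum.distrib distrib_right sum_distrib_left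
      mult.assoc)

lemma inj_on_gr_act_list:
  assumes fin: "finite (Gal K)" and span: "K_span K (set bs) = UNIV"
  shows "inj_on (gr_act_list (Gal K) bs) (grp_ring (Gal K))"
  unfolding pp.linear_inj_on_iff_eq_0[OF linear_gr_act_list subspace_grp_ring]
proof (intro ballI impI)
  fix u assume u: "u \<in> grp_ring (Gal K)" and u0: "gr_act_list (Gal K) bs u = 0"
  have "gr_act (Gal K) u (bs ! i) = 0" if "i < length bs" for i
    using that fun_cong[OF u0, of i] by (simp add: gr_act_list_def)
  then show "u = 0"
    by (intro gr_act_eq_0_imp_eq_0[OF fin span u]) (auto simp: in_set_conv_nth)
qed

text \<open>The rows of the \<open>G \<times> N\<close> matrix \<open>(h (a \<beta>\<^sub>j))\<close> are the values of \<open>\<delta>\<^sub>h \<circ> a\<close> on the basis, its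
  columns are the conjugate vectors of the \<open>a \<beta>\<^sub>j\<close>.\<close>
lemma dim_comp_prod_delta_eq_dim_conjugates:
  assumes fin: "finite (Gal K)" and span: "K_span K (set \<beta>) = UNIV"
  shows "pv.dim ((\<lambda>h. comp_prod (Gal K) (delta h) a) ` Gal K)
    = pv.dim (conjugates K ` gr_act (Gal K) a ` set \<beta>)"
proof -
  let ?D = "(\<lambda>h. comp_prod (Gal K) (delta h) a) ` Gal K" and ?ev = "gr_act_list (Gal K) \<beta>"
  define m where "m h j = (if h \<in> Gal K \<and> j < length \<beta> then h (gr_act (Gal K) a (\<beta> ! j)) else 0)"
    for h j
  have "?D \<subseteq> grp_ring (Gal K)"
    by (auto simp: comp_prod_def grp_ring_def)
  then have "inj_on ?ev (pv.span ?D)"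
    using inj_on_subset[OF inj_on_gr_act_list[OF fin span]] pv.span_minimal subspace_grp_ring
    by blast
  then have "pv.dim ?D = pv.dim (?ev ` ?D)"
    by (rule dim_image_inj_on[OF linear_gr_act_list, symmetric])
  also have "?ev ` ?D = m ` Gal K"
  proof -
    have "?ev (comp_prod (Gal K) (delta h) a) = (\<lambda>j. m h j)" if "h \<in> Gal K" for h
      using that fin by (auto simp: gr_act_list_def m_def gr_act_comp_prod gr_act_delta)
    then show ?thesis unfolding image_image by (rule image_cong[OF refl])
  qed
  also have "pv.dim \<dots> = pv.dim ((\<lambda>j h. m h j) ` {..<length \<beta>})"
    by (rule dim_rows_eq_dim_cols[OF fin finite_lessThan]) (auto simp: m_def)
  also have "(\<lambda>j h. m h j) ` {..<length \<beta>} = conjugates K ` gr_act (Gal K) a ` set \<beta>"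
  proof -
    have "(\<lambda>j h. m h j) ` {..<length \<beta>}
        = (\<lambda>j. conjugates K (gr_act (Gal K) a (\<beta> ! j))) ` {..<length \<beta>}"
      by (rule image_cong[OF refl]) (auto simp: m_def conjugates_def)
    then show ?thesis by (simp add: set_eq_nth_image[of \<beta>] image_image)
  qed
  finally show ?thesis .
qed

section \<open>Moore and Dickson matrices\<close>

lemma rank_moore_mat:
  assumes gs: "set gs = Gal K"
  shows "vec_space.rank (length gs) (moore_mat gs vs) = pv.dim (conjugates K ` set vs)"
proof -
  have "moore_mat gs vs = mat (length gs) (length vs) (\<lambda>(i, j). conjugates K (vs ! j) (gs ! i))"
    unfolding moore_mat_def using gs by (intro cong_mat) (auto simp: conjugates_def)
  moreover have "conjugates K ` set vs = (\<lambda>j. conjugates K (vs ! j)) ` {..<length vs}"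
    by (simp add: set_eq_nth_image[of vs] image_image)
  moreover have "(\<lambda>j. conjugates K (vs ! j)) ` {..<length vs} \<subseteq> grp_ring (Gal K)"
    by (auto simp: conjugates_def grp_ring_def)
  ultimately show ?thesis
    using rank_mat_eq_dim[OF gs] by simp
qed

lemma rank_dickson_mat:
  assumes fin: "finite (Gal K)" and gs: "set gs = Gal K"
  shows "vec_space.rank (length gs) (dickson_mat gs a)
    = pv.dim ((\<lambda>h. comp_prod (Gal K) (delta h) a) ` Gal K)"
proof -
  let ?F = "\<lambda>j. comp_prod (Gal K) (delta (gs ! j)) a"
  have mem: "gs ! i \<in> Gal K" if "i < length gs" for i
    using that gs nth_mem by blast
  have "dickson_mat gs a = mat (length gs) (length gs) (\<lambda>(i, j). ?F j (gs ! i))"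
    unfolding dickson_mat_def by (intro cong_mat) (auto simp: comp_prod_delta[OF fin mem mem])
  moreover have "(\<lambda>h. comp_prod (Gal K) (delta h) a) ` Gal K = ?F ` {..<length gs}"
    unfolding gs[symmetric] by (simp add: set_eq_nth_image[of gs] image_image)
  moreover have "?F ` {..<length gs} \<subseteq> grp_ring (Gal K)"
    by (auto simp: comp_prod_def grp_ring_def)
  ultimately show ?thesis
    using rank_mat_eq_dim[OF gs] by simp
qed

theorem mainTheorem8:
  fixes K :: "'a::field set" and gs :: "('a \<Rightarrow> 'a) list"
    and a :: "('a \<Rightarrow> 'a) \<Rightarrow> 'a" and \<beta> :: "'a list"
  assumes gal: "finite_galois K"
    and gs: "distinct gs" "set gs = Gal K"
    and a: "a \<in> grp_ring (Gal K)"
    and \<beta>: "distinct \<beta>" "K_is_basis K UNIV (set \<beta>)"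
  shows "rk_K K (Gal K) a = L_quot_dim (grp_ring (Gal K)) (Ann (Gal K) a)
       \<and> L_quot_dim (grp_ring (Gal K)) (Ann (Gal K) a)
           = vec_space.rank (length gs) (moore_mat gs (map (gr_act (Gal K) a) \<beta>))
       \<and> vec_space.rank (length gs) (moore_mat gs (map (gr_act (Gal K) a) \<beta>))
           = vec_space.rank (length gs) (dickson_mat gs a)"
proof -
  \<comment> \<open>Neither distinctness hypothesis nor \<open>a \<in> L[G]\<close> is needed: only the values of \<open>a\<close> on \<open>G\<close>
    enter, and repeated rows or columns do not change a rank.\<close>
  let ?D = "(\<lambda>h. comp_prod (Gal K) (delta h) a) ` Gal K"
    and ?C = "conjugates K ` gr_act (Gal K) a ` set \<beta>"
  have fin: "finite (Gal K)" using gs(2) by (metis finite_set)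
  have K: "subfield_of K" using gal unfolding finite_galois_def by blast
  have span: "K_span K (set \<beta>) = UNIV" using \<beta>(2) unfolding K_is_basis_def by blast
  have "rk_K K (Gal K) a = pv.dim ?C"
    unfolding rk_K_def range_gr_act[OF K finite_set span] by (rule K_dim_K_span[OF gal]) simp
  moreover have "L_quot_dim (grp_ring (Gal K)) (Ann (Gal K) a) = pv.dim ?D"
    by (rule L_quot_dim_Ann[OF fin])
  moreover have "pv.dim ?D = pv.dim ?C"
    by (rule dim_comp_prod_delta_eq_dim_conjugates[OF fin span])
  moreover have "vec_space.rank (length gs) (moore_mat gs (map (gr_act (Gal K) a) \<beta>)) = pv.dim ?C"
    using rank_moore_mat[OF gs(2)] by simp
  moreover have "vec_space.rank (length gs) (dickson_mat gs a) = pv.dim ?D"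
    by (rule rank_dickson_mat[OF fin gs(2)])
  ultimately show ?thesis by simp
qed

end
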